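(* Let $\mathcal{K}$ be the fragment of $\mathcal{V}$ whose formulas are generated only by the rules: $\{n\}\in VF(\mathbf{N})$; $(V\mapsto\Phi)\in VF(\tau\to\tau')$ for $V\in\mathit{Val}(\tau)$ and $\Phi$ a computation formula of $\mathcal{K}$ of type $\tau'$; $o\,\phi$ a computation formula for $o\in\mathcal{O}$ and $\phi$ a value formula of $\mathcal{K}$; and closure of value formulas (only) under arbitrary $\bigvee$, $\bigwedge$ and $\neg$ (so computation formulas of $\mathcal{K}$ are exactly the formulas $o\,\phi$). Then the induced logical equivalence $\equiv_{\mathcal{K}}$ coincides with $\equiv_{\mathcal{V}}$.
   Context: Language: simply typed call-by-value language with types $\tau ::= \mathbf{1}\mid\mathbf{N}\mid\tau\to\tau'$, values $*, Z, S(V), \lambda x{:}\tau.M, x$, computations $VW$, $\mathbf{return}\,V$, $\mathbf{let}\,M\Rightarrow x\,\mathbf{in}\,N$, $\mathbf{fix}(V)$, case on naturals, and effect operations from a signature $\Sigma$. $\mathit{Val}(\tau)$, $\mathit{Com}(\tau)$: closed values/computations; $\overline{n}=S^n(Z)$. Each $M\in\mathit{Com}(\tau)$ has an operational effect tree $|M|\in T(\mathit{Val}(\tau))$, where $TX$ is the set of possibly infinite trees with leaves $\bot$ or in $X$ and internal nodes labelled by effect operations. A set $\mathcal{O}$ of modalities is given with $[\![o]\!]\subseteq T\mathbf{1}$; $t[\in P]$ replaces leaves in $P$ by $*$ and other value leaves by $\bot$. Logic $\mathcal{V}$: value formulas $VF(\tau)$, computation formulas $CF(\tau)$: $\{n\}\in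 VF(\mathbf{N})$; $(V\mapsto\Phi)\in VF(\tau\to\tau')$ for $V\in\mathit{Val}(\tau)$, $\Phi\in CF(\tau')$; $o\phi\in CF(\tau)$; both classes closed under arbitrary $\bigwedge,\bigvee,\neg$. $W\models\{n\}$ iff $W=\overline{n}$; $W\models(V\mapsto\Phi)$ iff $WV\models\Phi$; $M\models o\phi$ iff $|M|[\in\{V\mid V\models\phi\}]\in[\![o]\!]$. For a fragment $\mathcal{L}$, two terms of the same type and aspect (value/computation) are $\equiv_{\mathcal{L}}$-equivalent iff they satisfy the same formulas of $\mathcal{L}$. *)

theory Defs
  imports Main
begin

section \<open>Types and terms (de Bruijn indices)\<close>

datatype ty = TUnit | TNat | TFun ty ty

text \<open>Arities of effect operations: sigma : alpha^n -> alpha,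
  sigma : N x alpha^n -> alpha, sigma : alpha^N -> alpha.\<close>
datatype arity = AFin nat | APar nat | ANat

datatype 'op val =
    VUnit | VZero | VSucc "'op val" | VLam ty "'op com" | VVar nat
and 'op com =
    App "'op val" "'op val"
  | Ret "'op val"
  | Let "'op com" "'op com"            \<comment> \<open>let M => x in N; x bound (index 0) in N\<close>
  | Fix "'op val"
  | Case "'op val" "'op com" "'op com" \<comment> \<open>case V of Z => M | S(x) => N; x bound in N\<close>
  | OpF 'op "'op com list"
  | OpP 'op "'op val" "'op com list"
  | OpN 'op "'op val"                  \<comment> \<open>sigma(V), V : N -> tau, continuation n |-> V n\<close>

primrec liftv :: "nat \<Rightarrow> 'op val \<Rightarrow> 'op val"
  and liftc :: "nat \<Rightarrow> 'op com \<Rightarrow> 'op com" where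
  "liftv k VUnit = VUnit"
| "liftv k VZero = VZero"
| "liftv k (VSucc v) = VSucc (liftv k v)"
| "liftv k (VLam t m) = VLam t (liftc (Suc k) m)"
| "liftv k (VVar i) = (if i < k then VVar i else VVar (Suc i))"
| "liftc k (App v w) = App (liftv k v) (liftv k w)"
| "liftc k (Ret v) = Ret (liftv k v)"
| "liftc k (Let m n) = Let (liftc k m) (liftc (Suc k) n)"
| "liftc k (Fix v) = Fix (liftv k v)"
| "liftc k (Case v m n) = Case (liftv k v) (liftc k m) (liftc (Suc k) n)"
| "liftc k (OpF s ms) = OpF s (map (liftc k) ms)"
| "liftc k (OpP s v ms) = OpP s (liftv k v) (map (liftc k) ms)"
| "liftc k (OpN s v) = OpN s (liftv k v)"

primrec substv :: "nat \<Rightarrow> 'op val \<Rightarrow> 'op val \<Rightarrow> 'op val"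
  and substc :: "nat \<Rightarrow> 'op val \<Rightarrow> 'op com \<Rightarrow> 'op com" where
  "substv k u VUnit = VUnit"
| "substv k u VZero = VZero"
| "substv k u (VSucc v) = VSucc (substv k u v)"
| "substv k u (VLam t m) = VLam t (substc (Suc k) (liftv 0 u) m)"
| "substv k u (VVar i) = (if i < k then VVar i else if i = k then u else VVar (i - 1))"
| "substc k u (App v w) = App (substv k u v) (substv k u w)"
| "substc k u (Ret v) = Ret (substv k u v)"
| "substc k u (Let m n) = Let (substc k u m) (substc (Suc k) (liftv 0 u) n)"
| "substc k u (Fix v) = Fix (substv k u v)"
| "substc k u (Case v m n) = Case (substv k u v) (substc k u m) (substc (Suc k) (liftv 0 u) n)"
| "substc k u (OpF s ms) = OpF s (map (substc k u) ms)"
| "substc k u (OpP s v ms) = OpP s (substv k u v) (map (substc k u) ms)"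
| "substc k u (OpN s v) = OpN s (substv k u v)"

definition num :: "nat \<Rightarrow> 'op val" where
  "num n = (VSucc ^^ n) VZero"

inductive vtyp :: "('op \<Rightarrow> arity) \<Rightarrow> ty list \<Rightarrow> 'op val \<Rightarrow> ty \<Rightarrow> bool"
  and ctyp :: "('op \<Rightarrow> arity) \<Rightarrow> ty list \<Rightarrow> 'op com \<Rightarrow> ty \<Rightarrow> bool"
  for ar :: "'op \<Rightarrow> arity" where
  "vtyp ar G VUnit TUnit"
| "vtyp ar G VZero TNat"
| "vtyp ar G v TNat \<Longrightarrow> vtyp ar G (VSucc v) TNat"
| "ctyp ar (s # G) m t \<Longrightarrow> vtyp ar G (VLam s m) (TFun s t)"
| "i < length G \<Longrightarrow> vtyp ar G (VVar i) (G ! i)"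
| "vtyp ar G v (TFun s t) \<Longrightarrow> vtyp ar G w s \<Longrightarrow> ctyp ar G (App v w) t"
| "vtyp ar G v t \<Longrightarrow> ctyp ar G (Ret v) t"
| "ctyp ar G m s \<Longrightarrow> ctyp ar (s # G) n t \<Longrightarrow> ctyp ar G (Let m n) t"
| "vtyp ar G v (TFun (TFun s t) (TFun s t)) \<Longrightarrow> ctyp ar G (Fix v) (TFun s t)"
| "vtyp ar G v TNat \<Longrightarrow> ctyp ar G m t \<Longrightarrow> ctyp ar (TNat # G) n t \<Longrightarrow> ctyp ar G (Case v m n) t"
| "ar s = AFin (length ms) \<Longrightarrow> (\<forall>m\<in>set ms. ctyp ar G m t) \<Longrightarrow> ctyp ar G (OpF s ms) t"
| "ar s = APar (length ms) \<Longrightarrow> vtyp ar G v TNat \<Longrightarrow> (\<forall>m\<in>set ms. ctyp ar G m t)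
     \<Longrightarrow> ctyp ar G (OpP s v ms) t"
| "ar s = ANat \<Longrightarrow> vtyp ar G v (TFun TNat t) \<Longrightarrow> ctyp ar G (OpN s v) t"

definition Val :: "('op \<Rightarrow> arity) \<Rightarrow> ty \<Rightarrow> 'op val set" where
  "Val ar t = {v. vtyp ar [] v t}"

definition Com :: "('op \<Rightarrow> arity) \<Rightarrow> ty \<Rightarrow> 'op com set" where
  "Com ar t = {m. ctyp ar [] m t}"

codatatype ('op, 'a) tree =
    is_Leaf: Leaf (leaf: 'a)
  | is_Bot: Bot
  | is_NodeF: NodeF (nfop: 'op) (nfts: "('op, 'a) tree list")
  | is_NodeP: NodeP (npop: 'op) (npn: nat) (npts: "('op, 'a) tree list")
  | is_NodeN: NodeN (nnop: 'op) (nnf: "nat \<Rightarrow> ('op, 'a) tree")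

type_synonym 'op cfg = "'op com list \<times> 'op com"

inductive step :: "'op cfg \<Rightarrow> 'op cfg \<Rightarrow> bool" where
  "step (S, Let m n) (n # S, m)"
| "step (n # S, Ret v) (S, substc 0 v n)"
| "step (S, App (VLam t m) v) (S, substc 0 v m)"
| "step (S, Fix (VLam (TFun s t) m))
     (S, App (VLam (TFun s t) m)
             (VLam s (Let (Fix (liftv 0 (VLam (TFun s t) m))) (App (VVar 0) (VVar 1)))))"
| "step (S, Case VZero m n) (S, m)"
| "step (S, Case (VSucc v) m n) (S, substc 0 v n)"

datatype 'op result =
    is_RLeaf: RLeaf (rleaf: "'op val")
  | is_RBot: RBot
  | is_RF: RF (rfop: 'op) (rfcs: "'op cfg list")
  | is_RP: RP (rpop: 'op) (rpn: nat) (rpcs: "'op cfg list")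
  | is_RN: RN (rnop: 'op) (rnf: "nat \<Rightarrow> 'op cfg")

fun final_result :: "'op cfg \<Rightarrow> 'op result" where
  "final_result ([], Ret v) = RLeaf v"
| "final_result (S, OpF s ms) = RF s (map (\<lambda>m. (S, m)) ms)"
| "final_result (S, OpP s v ms) =
     (if \<exists>n. v = num n then RP s (THE n. v = num n) (map (\<lambda>m. (S, m)) ms) else RBot)"
| "final_result (S, OpN s v) = RN s (\<lambda>n. (S, App v (num n)))"
| "final_result _ = RBot"

definition is_final :: "'op cfg \<Rightarrow> bool" where
  "is_final c = (final_result c \<noteq> RBot)"

text \<open>Run the (deterministic) machine until a terminal configuration; if none is
  ever reached (divergence or stuck), the result is the bottom leaf.\<close>
definition result :: "'op cfg \<Rightarrow> 'op result" where
  "result c = (if \<exists>c'. step\<^sup>*\<^sup>* c c' \<and> is_final c'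
               then final_result (THE c'. step\<^sup>*\<^sup>* c c' \<and> is_final c') else RBot)"

primcorec run :: "'op cfg \<Rightarrow> ('op, 'op val) tree" where
  "run c = (case result c of
      RLeaf v \<Rightarrow> Leaf v
    | RBot \<Rightarrow> Bot
    | RF s cs \<Rightarrow> NodeF s (map run cs)
    | RP s n cs \<Rightarrow> NodeP s n (map run cs)
    | RN s f \<Rightarrow> NodeN s (run \<circ> f))"

definition optree :: "'op com \<Rightarrow> ('op, 'op val) tree" where
  "optree m = run ([], m)"

primcorec restrict :: "'a set \<Rightarrow> ('op, 'a) tree \<Rightarrow> ('op, unit) tree" where
  "restrict P t = (case t of
      Leaf v \<Rightarrow> (if v \<in> P then Leaf () else Bot)
    | Bot \<Rightarrow> Bot
    | NodeF s ts \<Rightarrow> NodeF s (map (restrict P) ts)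
    | NodeP s n ts \<Rightarrow> NodeP s n (map (restrict P) ts)
    | NodeN s f \<Rightarrow> NodeN s (restrict P \<circ> f))"

section \<open>The logics V and K, given by the sets of terms satisfying their formulas\<close>

text \<open>VFV ar Mods I t P: P is the set of closed values of type t satisfying some
  value formula of V of type t (and similarly CFV for computation formulas).\<close>
inductive VFV :: "('op \<Rightarrow> arity) \<Rightarrow> 'm set \<Rightarrow> ('m \<Rightarrow> ('op, unit) tree set)
                   \<Rightarrow> ty \<Rightarrow> 'op val set \<Rightarrow> bool"
  and CFV :: "('op \<Rightarrow> arity) \<Rightarrow> 'm set \<Rightarrow> ('m \<Rightarrow> ('op, unit) tree set)
                   \<Rightarrow> ty \<Rightarrow> 'op com set \<Rightarrow> bool"
  for ar Mods I where
  VV_num: "VFV ar Mods I TNat {num n}"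
| VV_app: "v \<in> Val ar s \<Longrightarrow> CFV ar Mods I t A
     \<Longrightarrow> VFV ar Mods I (TFun s t) {w \<in> Val ar (TFun s t). App w v \<in> A}"
| VV_Inter: "(\<forall>P\<in>F. VFV ar Mods I t P) \<Longrightarrow> VFV ar Mods I t (Val ar t \<inter> \<Inter>F)"
| VV_Union: "(\<forall>P\<in>F. VFV ar Mods I t P) \<Longrightarrow> VFV ar Mods I t (Val ar t \<inter> \<Union>F)"
| VV_Neg: "VFV ar Mods I t P \<Longrightarrow> VFV ar Mods I t (Val ar t - P)"
| CV_mod: "md \<in> Mods \<Longrightarrow> VFV ar Mods I t P
     \<Longrightarrow> CFV ar Mods I t {m \<in> Com ar t. restrict P (optree m) \<in> I md}"
| CV_Inter: "(\<forall>A\<in>F. CFV ar Mods I t A) \<Longrightarrow> CFV ar Mods I t (Com ar t \<inter> \<Inter>F)"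
| CV_Union: "(\<forall>A\<in>F. CFV ar Mods I t A) \<Longrightarrow> CFV ar Mods I t (Com ar t \<inter> \<Union>F)"
| CV_Neg: "CFV ar Mods I t A \<Longrightarrow> CFV ar Mods I t (Com ar t - A)"

inductive VFK :: "('op \<Rightarrow> arity) \<Rightarrow> 'm set \<Rightarrow> ('m \<Rightarrow> ('op, unit) tree set)
                   \<Rightarrow> ty \<Rightarrow> 'op val set \<Rightarrow> bool"
  and CFK :: "('op \<Rightarrow> arity) \<Rightarrow> 'm set \<Rightarrow> ('m \<Rightarrow> ('op, unit) tree set)
                   \<Rightarrow> ty \<Rightarrow> 'op com set \<Rightarrow> bool"
  for ar Mods I where
  VK_num: "VFK ar Mods I TNat {num n}"
| VK_app: "v \<in> Val ar s \<Longrightarrow> CFK ar Mods I t A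
     \<Longrightarrow> VFK ar Mods I (TFun s t) {w \<in> Val ar (TFun s t). App w v \<in> A}"
| VK_Inter: "(\<forall>P\<in>F. VFK ar Mods I t P) \<Longrightarrow> VFK ar Mods I t (Val ar t \<inter> \<Inter>F)"
| VK_Union: "(\<forall>P\<in>F. VFK ar Mods I t P) \<Longrightarrow> VFK ar Mods I t (Val ar t \<inter> \<Union>F)"
| VK_Neg: "VFK ar Mods I t P \<Longrightarrow> VFK ar Mods I t (Val ar t - P)"
| CK_mod: "md \<in> Mods \<Longrightarrow> VFK ar Mods I t P
     \<Longrightarrow> CFK ar Mods I t {m \<in> Com ar t. restrict P (optree m) \<in> I md}"

definition lequiv :: "('a set \<Rightarrow> bool) \<Rightarrow> 'a \<Rightarrow> 'a \<Rightarrow> bool" where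
  "lequiv D x y = (\<forall>P. D P \<longrightarrow> (x \<in> P \<longleftrightarrow> y \<in> P))"

end

theory Submission
  imports Defs
begin

text \<open>Every formula of \<open>\<K>\<close> is a formula of \<open>\<V>\<close>, so \<open>\<equiv>\<^sub>\<V>\<close> refines \<open>\<equiv>\<^sub>\<K>\<close>. Conversely, since
  value formulas of \<open>\<K>\<close> are closed under arbitrary Boolean combinations, every set of values
  that is a union of \<open>\<equiv>\<^sub>\<K>\<close>-classes is denoted by a \<open>\<K>\<close> value formula (a union of the
  conjunctions characterising each class). By induction on formulas of \<open>\<V>\<close>, every \<open>\<V>\<close> value
  formula is then equivalent to a \<open>\<K>\<close> value formula, and every \<open>\<V>\<close> computation formula is
  \<open>\<equiv>\<^sub>\<K>\<close>-invariant: a modality \<open>o \<phi>\<close> of \<open>\<V>\<close> already is one of \<open>\<K>\<close>, and invariance is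
  preserved by Boolean combinations of computation formulas.\<close>

definition lequiv_closed :: "('a set \<Rightarrow> bool) \<Rightarrow> 'a set \<Rightarrow> 'a set \<Rightarrow> bool" where
  "lequiv_closed D U A \<longleftrightarrow> (\<forall>x\<in>U. \<forall>y\<in>U. lequiv D x y \<longrightarrow> (x \<in> A \<longleftrightarrow> y \<in> A))"

lemma lequiv_antimono:
  assumes "\<And>P. D P \<Longrightarrow> D' P" and "lequiv D' x y"
  shows "lequiv D x y"
  using assms unfolding lequiv_def by blast

lemma lequiv_closed_by_definable:
  assumes "D A"
  shows "lequiv_closed D U A"
  using assms unfolding lequiv_closed_def lequiv_def by blast

lemma definable_if_lequiv_closed:
  assumes Inter: "\<And>F. \<forall>P\<in>F. D P \<Longrightarrow> D (U \<inter> \<Inter>F)"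
    and Union: "\<And>F. \<forall>P\<in>F. D P \<Longrightarrow> D (U \<inter> \<Union>F)"
    and Neg: "\<And>P. D P \<Longrightarrow> D (U - P)"
    and "A \<subseteq> U" and "lequiv_closed D U A"
  shows "D A"
proof -
  define eqclass where
    "eqclass x = U \<inter> \<Inter>({P. D P \<and> x \<in> P} \<union> {U - P | P. D P \<and> x \<notin> P})" for x
  have eqclass_definable: "D (eqclass x)" for x
    unfolding eqclass_def by (rule Inter) (blast intro: Neg)
  have eqclass_iff: "y \<in> eqclass x \<longleftrightarrow> y \<in> U \<and> lequiv D x y" for x y
    unfolding eqclass_def lequiv_def by blast
  have "A = U \<inter> \<Union>(eqclass ` A)"
  proof
    show "A \<subseteq> U \<inter> \<Union>(eqclass ` A)"
      using \<open>A \<subseteq> U\<close> eqclass_iff unfolding lequiv_def by blast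
    show "U \<inter> \<Union>(eqclass ` A) \<subseteq> A"
    proof
      fix y
      assume "y \<in> U \<inter> \<Union>(eqclass ` A)"
      then obtain x where "x \<in> A" "y \<in> U" "lequiv D x y"
        using eqclass_iff by blast
      with \<open>A \<subseteq> U\<close> \<open>lequiv_closed D U A\<close> show "y \<in> A"
        unfolding lequiv_closed_def by blast
    qed
  qed
  moreover have "D (U \<inter> \<Union>(eqclass ` A))"
    by (rule Union) (blast intro: eqclass_definable)
  ultimately show ?thesis by simp
qed

lemma VFK_if_lequiv_closed:
  assumes "A \<subseteq> Val ar t" and "lequiv_closed (VFK ar Mods I t) (Val ar t) A"
  shows "VFK ar Mods I t A"
  by (rule definable_if_lequiv_closed[where D = "VFK ar Mods I t" and U = "Val ar t"])
    (fact VK_Inter VK_Union VK_Neg assms)+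

lemma VFK_imp_VFV_and_CFK_imp_CFV:
  "VFK ar Mods I t P \<Longrightarrow> VFV ar Mods I t P"
  "CFK ar Mods I t A \<Longrightarrow> CFV ar Mods I t A"
  by (induction rule: VFK_CFK.inducts) (auto intro: VFV_CFV.intros)

lemma App_in_Com:
  "w \<in> Val ar (TFun s t) \<Longrightarrow> v \<in> Val ar s \<Longrightarrow> App w v \<in> Com ar t"
  unfolding Val_def Com_def by (auto intro: vtyp_ctyp.intros)

lemma lequiv_CFK_App:
  assumes "v \<in> Val ar s" and "lequiv (VFK ar Mods I (TFun s t)) w w'"
    and "w \<in> Val ar (TFun s t)" and "w' \<in> Val ar (TFun s t)"
  shows "lequiv (CFK ar Mods I t) (App w v) (App w' v)"
  unfolding lequiv_def
proof (intro allI impI)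
  fix B
  assume "CFK ar Mods I t B"
  with \<open>v \<in> Val ar s\<close> have "VFK ar Mods I (TFun s t) {u \<in> Val ar (TFun s t). App u v \<in> B}"
    by (rule VK_app)
  then show "App w v \<in> B \<longleftrightarrow> App w' v \<in> B"
    using assms(2-4) unfolding lequiv_def by blast
qed

lemma VFV_imp_VFK_and_CFV_lequiv_closed:
  "VFV ar Mods I t P \<Longrightarrow> VFK ar Mods I t P"
  "CFV ar Mods I t A \<Longrightarrow> lequiv_closed (CFK ar Mods I t) (Com ar t) A"
proof (induction rule: VFV_CFV.inducts)
  case (VV_num n)
  show ?case by (rule VK_num)
next
  case (VV_app v s t A)
  show ?case
  proof (rule VFK_if_lequiv_closed)
    show "lequiv_closed (VFK ar Mods I (TFun s t)) (Val ar (TFun s t))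
            {w \<in> Val ar (TFun s t). App w v \<in> A}"
      unfolding lequiv_closed_def
    proof (intro ballI impI)
      fix w w'
      assume w: "w \<in> Val ar (TFun s t)" and w': "w' \<in> Val ar (TFun s t)"
        and "lequiv (VFK ar Mods I (TFun s t)) w w'"
      then have "lequiv (CFK ar Mods I t) (App w v) (App w' v)"
        using VV_app(1) by (intro lequiv_CFK_App)
      then show "w \<in> {w \<in> Val ar (TFun s t). App w v \<in> A} \<longleftrightarrow>
                 w' \<in> {w \<in> Val ar (TFun s t). App w v \<in> A}"
        using VV_app(3) w w' App_in_Com[OF _ VV_app(1)]
        unfolding lequiv_closed_def by blast
    qed
  qed auto
next
  case (VV_Inter F t)
  then show ?case by (intro VK_Inter) auto
next
  case (VV_Union F t)
  then show ?case by (intro VK_Union) auto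
next
  case (VV_Neg t P)
  then show ?case by (intro VK_Neg)
next
  case (CV_mod md t P)
  then show ?case by (intro lequiv_closed_by_definable CK_mod)
next
  case (CV_Inter F t)
  then show ?case unfolding lequiv_closed_def by blast
next
  case (CV_Union F t)
  then show ?case unfolding lequiv_closed_def by blast
next
  case (CV_Neg t A)
  then show ?case unfolding lequiv_closed_def by blast
qed

theorem proposition4p5:
  fixes ar :: "'op \<Rightarrow> arity" and Mods :: "'m set" and I :: "'m \<Rightarrow> ('op, unit) tree set"
  shows "(\<forall>t. \<forall>v \<in> Val ar t. \<forall>w \<in> Val ar t.
            lequiv (VFK ar Mods I t) v w \<longleftrightarrow> lequiv (VFV ar Mods I t) v w)
       \<and> (\<forall>t. \<forall>m \<in> Com ar t. \<forall>n \<in> Com ar t.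
            lequiv (CFK ar Mods I t) m n \<longleftrightarrow> lequiv (CFV ar Mods I t) m n)"
proof (intro conjI allI ballI iffI)
  fix t v w
  show "lequiv (VFK ar Mods I t) v w \<Longrightarrow> lequiv (VFV ar Mods I t) v w"
    by (rule lequiv_antimono[OF VFV_imp_VFK_and_CFV_lequiv_closed(1)])
  show "lequiv (VFV ar Mods I t) v w \<Longrightarrow> lequiv (VFK ar Mods I t) v w"
    by (rule lequiv_antimono[OF VFK_imp_VFV_and_CFK_imp_CFV(1)])
next
  fix t m n
  assume "m \<in> Com ar t" "n \<in> Com ar t"
  then show "lequiv (CFK ar Mods I t) m n \<Longrightarrow> lequiv (CFV ar Mods I t) m n"
    using VFV_imp_VFK_and_CFV_lequiv_closed(2)
    unfolding lequiv_def lequiv_closed_def by blast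
  show "lequiv (CFV ar Mods I t) m n \<Longrightarrow> lequiv (CFK ar Mods I t) m n"
    by (rule lequiv_antimono[OF VFK_imp_VFV_and_CFK_imp_CFV(2)])
qed

end
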